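(* For every formula $\varphi$ (in the syntax described in the context) there exists a formula $\varphi'$ in normal form such that $\varphi' \equiv \varphi$ and $|\varphi'| \leq 4^{7|\varphi|}$.
   Context: Fix a finite set $Ap$ of atomic propositions. A word is an infinite sequence $w = w[0]w[1]w[2]\dots$ of letters of $\Sigma = 2^{Ap}$, and $w_i$ denotes the suffix $w[i]w[i+1]\dots$. Formulas are generated by the grammar $\varphi ::= \mathbf{true} \mid \mathbf{false} \mid a \mid \neg a \mid \varphi\wedge\varphi \mid \varphi\vee\varphi \mid \mathbf{X}\varphi \mid \varphi\,\mathbf{U}\,\varphi \mid \varphi\,\mathbf{W}\,\varphi \mid \mathbf{GF}\varphi \mid \mathbf{FG}\varphi$ with $a \in Ap$, where $\mathbf{GF}$ and $\mathbf{FG}$ are single unary operators (the limit operators). Semantics: $w\models\mathbf{true}$ always, $w\not\models\mathbf{false}$; $w\models a$ iff $a\in w[0]$; $w\models\neg a$ iff $a\notin w[0]$; $\wedge,\vee$ as usual; $w\models\mathbf{X}\varphi$ iff $w_1\models\varphi$; $w\models\varphi\mathbf{U}\psi$ iff there is $k$ with $w_k\models\psi$ and $w_j\models\varphi$ for all $j<k$; $w\models\varphi\mathbf{W}\psi$ iff $w_k\models\varphi$ for all $k$ or $w\models\varphi\mathbf{U}\psi$; $w\models\mathbf{GF}\varphi$ iff $w_k\models\varphi$ for infinitely many $k$; $w\models\mathbf{FG}\varphi$ iff there is $n$ with $w_k\models\varphi$ for all $k\geq n$. Two formulas are equivalent ($\equiv$) if they are satisfied by exactly the same words. The syntax tree $T_\varphi$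 has leaves $\mathbf{true},\mathbf{false},a,\neg a$ and one internal node per operator occurrence with its operands as children; $|\varphi|$ is the number of nodes of $T_\varphi$. A node whose subformula has top operator $\mathbf{U}$ (resp. $\mathbf{W}$, $\mathbf{X}$, $\mathbf{GF}$, $\mathbf{FG}$) is a $\mathbf{U}$-node (resp. $\mathbf{W}$-, $\mathbf{X}$-, $\mathbf{GF}$-, $\mathbf{FG}$-node); $\mathbf{GF}$- and $\mathbf{FG}$-nodes are limit nodes; $\mathbf{U}$-, $\mathbf{W}$-, $\mathbf{X}$-, $\mathbf{GF}$-, $\mathbf{FG}$-nodes are temporal nodes. A node is under another node if it is a proper descendant of it in $T_\varphi$. A formula is in normal form if (1) no $\mathbf{U}$-node is under a $\mathbf{W}$-node; (2) no limit node is under another temporal node; (3) no $\mathbf{W}$-node is under a $\mathbf{GF}$-node and no $\mathbf{U}$-node is under an $\mathbf{FG}$-node. *)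

theory Defs
  imports Main
begin

datatype 'a ltl =
    True_ltl
  | False_ltl
  | Prop 'a
  | NProp 'a
  | And_ltl "'a ltl" "'a ltl"
  | Or_ltl "'a ltl" "'a ltl"
  | Next_ltl "'a ltl"
  | Until_ltl "'a ltl" "'a ltl"
  | WeakUntil_ltl "'a ltl" "'a ltl"
  | GF_ltl "'a ltl"
  | FG_ltl "'a ltl"

type_synonym 'a word = "nat \<Rightarrow> 'a set"

definition suffix_w :: "nat \<Rightarrow> 'a word \<Rightarrow> 'a word" where
  "suffix_w i w = (\<lambda>k. w (i + k))"

fun models :: "'a word \<Rightarrow> 'a ltl \<Rightarrow> bool" where
  "models w True_ltl = True"
| "models w False_ltl = False"
| "models w (Prop a) = (a \<in> w 0)"
| "models w (NProp a) = (a \<notin> w 0)"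
| "models w (And_ltl \<phi> \<psi>) = (models w \<phi> \<and> models w \<psi>)"
| "models w (Or_ltl \<phi> \<psi>) = (models w \<phi> \<or> models w \<psi>)"
| "models w (Next_ltl \<phi>) = models (suffix_w 1 w) \<phi>"
| "models w (Until_ltl \<phi> \<psi>) =
     (\<exists>k. models (suffix_w k w) \<psi> \<and> (\<forall>j<k. models (suffix_w j w) \<phi>))"
| "models w (WeakUntil_ltl \<phi> \<psi>) =
     ((\<forall>k. models (suffix_w k w) \<phi>) \<or>
      (\<exists>k. models (suffix_w k w) \<psi> \<and> (\<forall>j<k. models (suffix_w j w) \<phi>)))"
| "models w (GF_ltl \<phi>) = (\<exists>\<^sub>\<infinity>k. models (suffix_w k w) \<phi>)"
| "models w (FG_ltl \<phi>) = (\<exists>n. \<forall>k\<ge>n. models (suffix_w k w) \<phi>)"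

definition equiv_ltl :: "'a set \<Rightarrow> 'a ltl \<Rightarrow> 'a ltl \<Rightarrow> bool" where
  "equiv_ltl Ap \<phi> \<psi> = (\<forall>w. (\<forall>i. w i \<subseteq> Ap) \<longrightarrow> (models w \<phi> \<longleftrightarrow> models w \<psi>))"

fun atoms :: "'a ltl \<Rightarrow> 'a set" where
  "atoms True_ltl = {}"
| "atoms False_ltl = {}"
| "atoms (Prop a) = {a}"
| "atoms (NProp a) = {a}"
| "atoms (And_ltl \<phi> \<psi>) = atoms \<phi> \<union> atoms \<psi>"
| "atoms (Or_ltl \<phi> \<psi>) = atoms \<phi> \<union> atoms \<psi>"
| "atoms (Next_ltl \<phi>) = atoms \<phi>"
| "atoms (Until_ltl \<phi> \<psi>) = atoms \<phi> \<union> atoms \<psi>"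
| "atoms (WeakUntil_ltl \<phi> \<psi>) = atoms \<phi> \<union> atoms \<psi>"
| "atoms (GF_ltl \<phi>) = atoms \<phi>"
| "atoms (FG_ltl \<phi>) = atoms \<phi>"

fun fsize :: "'a ltl \<Rightarrow> nat" where
  "fsize True_ltl = 1"
| "fsize False_ltl = 1"
| "fsize (Prop a) = 1"
| "fsize (NProp a) = 1"
| "fsize (And_ltl \<phi> \<psi>) = 1 + fsize \<phi> + fsize \<psi>"
| "fsize (Or_ltl \<phi> \<psi>) = 1 + fsize \<phi> + fsize \<psi>"
| "fsize (Next_ltl \<phi>) = 1 + fsize \<phi>"
| "fsize (Until_ltl \<phi> \<psi>) = 1 + fsize \<phi> + fsize \<psi>"
| "fsize (WeakUntil_ltl \<phi> \<psi>) = 1 + fsize \<phi> + fsize \<psi>"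
| "fsize (GF_ltl \<phi>) = 1 + fsize \<phi>"
| "fsize (FG_ltl \<phi>) = 1 + fsize \<phi>"

fun subfs :: "'a ltl \<Rightarrow> 'a ltl set" where
  "subfs True_ltl = {True_ltl}"
| "subfs False_ltl = {False_ltl}"
| "subfs (Prop a) = {Prop a}"
| "subfs (NProp a) = {NProp a}"
| "subfs (And_ltl \<phi> \<psi>) = insert (And_ltl \<phi> \<psi>) (subfs \<phi> \<union> subfs \<psi>)"
| "subfs (Or_ltl \<phi> \<psi>) = insert (Or_ltl \<phi> \<psi>) (subfs \<phi> \<union> subfs \<psi>)"
| "subfs (Next_ltl \<phi>) = insert (Next_ltl \<phi>) (subfs \<phi>)"
| "subfs (Until_ltl \<phi> \<psi>) = insert (Until_ltl \<phi> \<psi>) (subfs \<phi> \<union> subfs \<psi>)"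
| "subfs (WeakUntil_ltl \<phi> \<psi>) = insert (WeakUntil_ltl \<phi> \<psi>) (subfs \<phi> \<union> subfs \<psi>)"
| "subfs (GF_ltl \<phi>) = insert (GF_ltl \<phi>) (subfs \<phi>)"
| "subfs (FG_ltl \<phi>) = insert (FG_ltl \<phi>) (subfs \<phi>)"

fun children :: "'a ltl \<Rightarrow> 'a ltl list" where
  "children (And_ltl \<phi> \<psi>) = [\<phi>, \<psi>]"
| "children (Or_ltl \<phi> \<psi>) = [\<phi>, \<psi>]"
| "children (Next_ltl \<phi>) = [\<phi>]"
| "children (Until_ltl \<phi> \<psi>) = [\<phi>, \<psi>]"
| "children (WeakUntil_ltl \<phi> \<psi>) = [\<phi>, \<psi>]"
| "children (GF_ltl \<phi>) = [\<phi>]"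
| "children (FG_ltl \<phi>) = [\<phi>]"
| "children _ = []"

definition proper_subfs :: "'a ltl \<Rightarrow> 'a ltl set" where
  "proper_subfs \<phi> = (\<Union>c\<in>set (children \<phi>). subfs c)"

fun is_U :: "'a ltl \<Rightarrow> bool" where
  "is_U (Until_ltl _ _) = True" | "is_U _ = False"
fun is_W :: "'a ltl \<Rightarrow> bool" where
  "is_W (WeakUntil_ltl _ _) = True" | "is_W _ = False"
fun is_X :: "'a ltl \<Rightarrow> bool" where
  "is_X (Next_ltl _) = True" | "is_X _ = False"
fun is_GF :: "'a ltl \<Rightarrow> bool" where
  "is_GF (GF_ltl _) = True" | "is_GF _ = False"
fun is_FG :: "'a ltl \<Rightarrow> bool" where
  "is_FG (FG_ltl _) = True" | "is_FG _ = False"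

definition is_limit :: "'a ltl \<Rightarrow> bool" where
  "is_limit \<phi> = (is_GF \<phi> \<or> is_FG \<phi>)"
definition is_temporal :: "'a ltl \<Rightarrow> bool" where
  "is_temporal \<phi> = (is_U \<phi> \<or> is_W \<phi> \<or> is_X \<phi> \<or> is_GF \<phi> \<or> is_FG \<phi>)"

definition under :: "('a ltl \<Rightarrow> bool) \<Rightarrow> ('a ltl \<Rightarrow> bool) \<Rightarrow> 'a ltl \<Rightarrow> bool" where
  "under Q P \<phi> = (\<exists>\<psi>\<in>subfs \<phi>. P \<psi> \<and> (\<exists>\<chi>\<in>proper_subfs \<psi>. Q \<chi>))"

definition normal_form :: "'a ltl \<Rightarrow> bool" where
  "normal_form \<phi> =
    (\<not> under is_U is_W \<phi> \<and>
     \<not> under is_limit is_temporal \<phi> \<and>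
     \<not> under is_W is_GF \<phi> \<and> \<not> under is_U is_FG \<phi>)"

end

theory Submission
  imports Defs "HOL-Library.Infinite_Set"
begin

text \<open>
  Since GF \<psi> and FG \<psi> can be written as G (true U \<psi>) and true U (G \<psi>), it suffices to
  normalise limit-free formulas, at the price of a factor 4 in size.

  For a limit-free \<phi> and a word, guess the set A of U-subformulas that hold infinitely often
  and W-subformulas that hold almost always. Relative to a correct guess, the Pi1-approximation
  (U-subformulas in A become W, the others false) and the Sigma1-approximation (W-subformulas in A
  become true, the others U) agree with the original from some position on, and the
  Sigma2-approximation (\<psi>1 W \<psi>2 becomes \<psi>1 U (\<psi>2 \<or> G \<psi>1'), with \<psi>1' the Pi1-approximation of
  \<psi>1) agrees with it everywhere. Conversely, if GF holds of the Sigma1-approximation of every U in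
  A and FG of the Pi1-approximation of every W in A, the guess is correct, by induction on the size
  of the subformulas. Hence \<phi> is equivalent to the disjunction, over all guesses A, of these
  GF and FG conjuncts together with the Sigma2-approximation of \<phi>. There are at most 2^|\<phi>|
  disjuncts, each in normal form and of size O(|\<phi>|^2).
\<close>

lemma subfs_refl: "\<phi> \<in> subfs \<phi>"
  by (cases \<phi>) auto

lemma subfs_trans: "\<psi> \<in> subfs \<phi> \<Longrightarrow> \<chi> \<in> subfs \<psi> \<Longrightarrow> \<chi> \<in> subfs \<phi>"
  by (induction \<phi>) auto

lemma finite_subfs: "finite (subfs \<phi>)"
  by (induction \<phi>) auto

lemma fsize_pos: "fsize \<phi> \<ge> 1"
  by (cases \<phi>) auto

lemma fsize_subfs_le: "\<psi> \<in> subfs \<phi> \<Longrightarrow> fsize \<psi> \<le> fsize \<phi>"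
  by (induction \<phi>) auto

lemma fsize_subfs_less:
  assumes "\<psi> \<in> subfs \<phi>" and "\<psi> \<noteq> \<phi>"
  shows "fsize \<psi> < fsize \<phi>"
proof -
  have "\<psi> = \<phi> \<or> fsize \<psi> < fsize \<phi>"
    using assms(1) by (induction \<phi>) auto
  then show ?thesis
    using assms(2) by simp
qed

lemma atoms_subfs: "\<psi> \<in> subfs \<phi> \<Longrightarrow> atoms \<psi> \<subseteq> atoms \<phi>"
  by (induction \<phi>) auto

lemma not_is_W_if_is_U: "is_U \<phi> \<Longrightarrow> \<not> is_W \<phi>"
  by (cases \<phi>) auto

lemma MOST_nat_uniform_on_subfs:
  assumes "\<forall>\<psi>\<in>subfs \<phi>. Q \<psi> \<longrightarrow> (MOST k::nat. P \<psi> k)"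
  obtains n where "\<forall>\<psi>\<in>subfs \<phi>. Q \<psi> \<longrightarrow> (\<forall>k\<ge>n. P \<psi> k)"
proof -
  have "finite {\<psi> \<in> subfs \<phi>. Q \<psi>}"
    by (rule finite_subset[OF _ finite_subfs]) auto
  then have "MOST k. \<forall>\<psi>\<in>{\<psi> \<in> subfs \<phi>. Q \<psi>}. P \<psi> k"
    unfolding MOST_finite_Ball_distrib[OF \<open>finite {\<psi> \<in> subfs \<phi>. Q \<psi>}\<close>] using assms by blast
  then show thesis
    using that unfolding MOST_nat_le by blast
qed

lemma MOST_nat_shift: "(MOST k. P (i + k)) \<longleftrightarrow> (MOST k::nat. P k)"
  using eventually_sequentially_seg[of P i] by (simp add: cofinite_eq_sequentially add.commute)

lemma INFM_nat_shift: "(INFM k. P (i + k)) \<longleftrightarrow> (INFM k::nat. P k)"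
  by (simp only: frequently_def MOST_nat_shift[of "\<lambda>k. \<not> P k" i])

definition sat :: "'a word \<Rightarrow> nat \<Rightarrow> 'a ltl \<Rightarrow> bool" where
  "sat w i \<phi> \<longleftrightarrow> models (suffix_w i w) \<phi>"

lemma models_eq_sat_0: "models w \<phi> \<longleftrightarrow> sat w 0 \<phi>"
  by (simp add: sat_def suffix_w_def)

lemma sat_simps [simp]:
  "sat w i True_ltl"
  "\<not> sat w i False_ltl"
  "sat w i (Prop a) \<longleftrightarrow> a \<in> w i"
  "sat w i (NProp a) \<longleftrightarrow> a \<notin> w i"
  "sat w i (And_ltl \<phi> \<psi>) \<longleftrightarrow> sat w i \<phi> \<and> sat w i \<psi>"
  "sat w i (Or_ltl \<phi> \<psi>) \<longleftrightarrow> sat w i \<phi> \<or> sat w i \<psi>"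
  "sat w i (Next_ltl \<phi>) \<longleftrightarrow> sat w (Suc i) \<phi>"
  "sat w i (Until_ltl \<phi> \<psi>) \<longleftrightarrow> (\<exists>k\<ge>i. sat w k \<psi> \<and> (\<forall>j\<in>{i..<k}. sat w j \<phi>))"
  "sat w i (WeakUntil_ltl \<phi> \<psi>) \<longleftrightarrow>
     (\<forall>k\<ge>i. sat w k \<phi>) \<or> (\<exists>k\<ge>i. sat w k \<psi> \<and> (\<forall>j\<in>{i..<k}. sat w j \<phi>))"
  "sat w i (GF_ltl \<phi>) \<longleftrightarrow> (INFM k. sat w k \<phi>)"
  "sat w i (FG_ltl \<phi>) \<longleftrightarrow> (MOST k. sat w k \<phi>)"
proof -
  have shift: "suffix_w k (suffix_w i w) = suffix_w (i + k) w" for k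
    by (simp add: suffix_w_def add.assoc)
  have Ex_shift: "(\<exists>k. P (i + k)) \<longleftrightarrow> (\<exists>k\<ge>i. P k)" for P :: "nat \<Rightarrow> bool"
    by (metis le_add1 le_add_diff_inverse)
  have All_shift: "(\<forall>k. P (i + k)) \<longleftrightarrow> (\<forall>k\<ge>i. P k)" for P :: "nat \<Rightarrow> bool"
    by (metis le_add1 le_add_diff_inverse)
  have window: "(\<forall>j<k. P (i + j)) \<longleftrightarrow> (\<forall>j\<in>{i..<i + k}. P j)" for P :: "nat \<Rightarrow> bool" and k
    by (metis add_less_cancel_left atLeastLessThan_iff le_add1 le_add_diff_inverse)
  have "sat w i (Until_ltl \<phi> \<psi>) \<longleftrightarrow> (\<exists>k. sat w (i + k) \<psi> \<and> (\<forall>j<k. sat w (i + j) \<phi>))"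
    by (simp add: sat_def shift)
  then show "sat w i (Until_ltl \<phi> \<psi>) \<longleftrightarrow> (\<exists>k\<ge>i. sat w k \<psi> \<and> (\<forall>j\<in>{i..<k}. sat w j \<phi>))"
    unfolding window[where P="\<lambda>j. sat w j \<phi>"]
    by (simp add: Ex_shift[of "\<lambda>k. sat w k \<psi> \<and> (\<forall>j\<in>{i..<k}. sat w j \<phi>)"])
  moreover have "sat w i (WeakUntil_ltl \<phi> \<psi>) \<longleftrightarrow>
      (\<forall>k. sat w (i + k) \<phi>) \<or> sat w i (Until_ltl \<phi> \<psi>)"
    by (simp add: sat_def shift)
  ultimately show "sat w i (WeakUntil_ltl \<phi> \<psi>) \<longleftrightarrow>
     (\<forall>k\<ge>i. sat w k \<phi>) \<or> (\<exists>k\<ge>i. sat w k \<psi> \<and> (\<forall>j\<in>{i..<k}. sat w j \<phi>))"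
    by (simp add: All_shift[of "\<lambda>k. sat w k \<phi>"])
  show "sat w i (GF_ltl \<phi>) \<longleftrightarrow> (INFM k. sat w k \<phi>)"
    using INFM_nat_shift[of "\<lambda>k. sat w k \<phi>" i] by (simp add: sat_def shift)
  show "sat w i (FG_ltl \<phi>) \<longleftrightarrow> (MOST k. sat w k \<phi>)"
    using MOST_nat_shift[of "\<lambda>k. sat w k \<phi>" i] by (simp add: sat_def shift MOST_nat_le)
qed (simp_all add: sat_def suffix_w_def)

lemma Until_if_WeakUntil_INFM:
  assumes "INFM k. sat w k (Until_ltl \<phi> \<psi>)" and "sat w i (WeakUntil_ltl \<phi> \<psi>)"
  shows "sat w i (Until_ltl \<phi> \<psi>)"
proof (cases "\<forall>k\<ge>i. sat w k \<phi>")
  case True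
  from assms(1) obtain k where "k \<ge> i" "sat w k (Until_ltl \<phi> \<psi>)"
    unfolding INFM_nat_le by blast
  then show ?thesis
    using True by (auto intro: le_trans)
next
  case False
  then show ?thesis using assms(2) by auto
qed

lemma Until_if_WeakUntil_not_MOST:
  assumes "\<not> (MOST k. sat w k (WeakUntil_ltl \<phi> \<psi>))" and "sat w i (WeakUntil_ltl \<phi> \<psi>)"
  shows "sat w i (Until_ltl \<phi> \<psi>)"
proof (rule ccontr)
  assume "\<not> sat w i (Until_ltl \<phi> \<psi>)"
  then have "\<forall>k\<ge>i. sat w k (WeakUntil_ltl \<phi> \<psi>)"
    using assms(2) by auto
  then show False
    using assms(1) unfolding MOST_nat_le by blast
qed

section \<open>Eliminating the limit operators\<close>

fun elim_limits :: "'a ltl \<Rightarrow> 'a ltl" where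
  "elim_limits (GF_ltl \<phi>) = WeakUntil_ltl (Until_ltl True_ltl (elim_limits \<phi>)) False_ltl"
| "elim_limits (FG_ltl \<phi>) = Until_ltl True_ltl (WeakUntil_ltl (elim_limits \<phi>) False_ltl)"
| "elim_limits (And_ltl \<phi> \<psi>) = And_ltl (elim_limits \<phi>) (elim_limits \<psi>)"
| "elim_limits (Or_ltl \<phi> \<psi>) = Or_ltl (elim_limits \<phi>) (elim_limits \<psi>)"
| "elim_limits (Next_ltl \<phi>) = Next_ltl (elim_limits \<phi>)"
| "elim_limits (Until_ltl \<phi> \<psi>) = Until_ltl (elim_limits \<phi>) (elim_limits \<psi>)"
| "elim_limits (WeakUntil_ltl \<phi> \<psi>) = WeakUntil_ltl (elim_limits \<phi>) (elim_limits \<psi>)"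
| "elim_limits \<phi> = \<phi>"

lemma sat_elim_limits: "sat w i (elim_limits \<phi>) \<longleftrightarrow> sat w i \<phi>"
proof (induction \<phi> arbitrary: i)
  case (GF_ltl \<phi>)
  have "(\<forall>k\<ge>i. \<exists>j\<ge>k. sat w j \<phi>) \<longleftrightarrow> (\<forall>m. \<exists>j\<ge>m. sat w j \<phi>)"
    by (metis le_trans nat_le_linear)
  then show ?case by (simp add: GF_ltl INFM_nat_le)
next
  case (FG_ltl \<phi>)
  have "(\<exists>k\<ge>i. \<forall>j\<ge>k. sat w j \<phi>) \<longleftrightarrow> (\<exists>m. \<forall>j\<ge>m. sat w j \<phi>)"
    by (metis le_trans nat_le_linear)
  then show ?case by (simp add: FG_ltl MOST_nat_le)
qed auto

fun limit_free :: "'a ltl \<Rightarrow> bool" where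
  "limit_free (GF_ltl \<phi>) \<longleftrightarrow> False"
| "limit_free (FG_ltl \<phi>) \<longleftrightarrow> False"
| "limit_free (And_ltl \<phi> \<psi>) \<longleftrightarrow> limit_free \<phi> \<and> limit_free \<psi>"
| "limit_free (Or_ltl \<phi> \<psi>) \<longleftrightarrow> limit_free \<phi> \<and> limit_free \<psi>"
| "limit_free (Next_ltl \<phi>) \<longleftrightarrow> limit_free \<phi>"
| "limit_free (Until_ltl \<phi> \<psi>) \<longleftrightarrow> limit_free \<phi> \<and> limit_free \<psi>"
| "limit_free (WeakUntil_ltl \<phi> \<psi>) \<longleftrightarrow> limit_free \<phi> \<and> limit_free \<psi>"
| "limit_free _ \<longleftrightarrow> True"

lemma limit_free_elim_limits: "limit_free (elim_limits \<phi>)"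
  by (induction \<phi>) auto

lemma limit_free_subfs: "limit_free \<phi> \<Longrightarrow> \<psi> \<in> subfs \<phi> \<Longrightarrow> limit_free \<psi>"
  by (induction \<phi>) auto

lemma atoms_elim_limits: "atoms (elim_limits \<phi>) = atoms \<phi>"
  by (induction \<phi>) auto

lemma fsize_elim_limits: "fsize (elim_limits \<phi>) + 3 \<le> 4 * fsize \<phi>"
  by (induction \<phi>) auto

section \<open>Approximations relative to a guess\<close>

fun pi1_subst :: "'a ltl set \<Rightarrow> 'a ltl \<Rightarrow> 'a ltl" where
  "pi1_subst A (Until_ltl \<phi> \<psi>) =
     (if Until_ltl \<phi> \<psi> \<in> A then WeakUntil_ltl (pi1_subst A \<phi>) (pi1_subst A \<psi>) else False_ltl)"
| "pi1_subst A (WeakUntil_ltl \<phi> \<psi>) = WeakUntil_ltl (pi1_subst A \<phi>) (pi1_subst A \<psi>)"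
| "pi1_subst A (And_ltl \<phi> \<psi>) = And_ltl (pi1_subst A \<phi>) (pi1_subst A \<psi>)"
| "pi1_subst A (Or_ltl \<phi> \<psi>) = Or_ltl (pi1_subst A \<phi>) (pi1_subst A \<psi>)"
| "pi1_subst A (Next_ltl \<phi>) = Next_ltl (pi1_subst A \<phi>)"
| "pi1_subst A \<phi> = \<phi>"

fun sigma1_subst :: "'a ltl set \<Rightarrow> 'a ltl \<Rightarrow> 'a ltl" where
  "sigma1_subst A (WeakUntil_ltl \<phi> \<psi>) =
     (if WeakUntil_ltl \<phi> \<psi> \<in> A then True_ltl else Until_ltl (sigma1_subst A \<phi>) (sigma1_subst A \<psi>))"
| "sigma1_subst A (Until_ltl \<phi> \<psi>) = Until_ltl (sigma1_subst A \<phi>) (sigma1_subst A \<psi>)"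
| "sigma1_subst A (And_ltl \<phi> \<psi>) = And_ltl (sigma1_subst A \<phi>) (sigma1_subst A \<psi>)"
| "sigma1_subst A (Or_ltl \<phi> \<psi>) = Or_ltl (sigma1_subst A \<phi>) (sigma1_subst A \<psi>)"
| "sigma1_subst A (Next_ltl \<phi>) = Next_ltl (sigma1_subst A \<phi>)"
| "sigma1_subst A \<phi> = \<phi>"

fun sigma2_subst :: "'a ltl set \<Rightarrow> 'a ltl \<Rightarrow> 'a ltl" where
  "sigma2_subst A (WeakUntil_ltl \<phi> \<psi>) =
     Until_ltl (sigma2_subst A \<phi>) (Or_ltl (sigma2_subst A \<psi>) (WeakUntil_ltl (pi1_subst A \<phi>) False_ltl))"
| "sigma2_subst A (Until_ltl \<phi> \<psi>) = Until_ltl (sigma2_subst A \<phi>) (sigma2_subst A \<psi>)"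
| "sigma2_subst A (And_ltl \<phi> \<psi>) = And_ltl (sigma2_subst A \<phi>) (sigma2_subst A \<psi>)"
| "sigma2_subst A (Or_ltl \<phi> \<psi>) = Or_ltl (sigma2_subst A \<phi>) (sigma2_subst A \<psi>)"
| "sigma2_subst A (Next_ltl \<phi>) = Next_ltl (sigma2_subst A \<phi>)"
| "sigma2_subst A \<phi> = \<phi>"

lemma sat_pi1_subst_imp:
  assumes "\<forall>u\<in>subfs \<phi>. is_U u \<longrightarrow> u \<in> A \<longrightarrow> (INFM k. sat w k u)"
    and "sat w i (pi1_subst A \<phi>)"
  shows "sat w i \<phi>"
  using assms
proof (induction \<phi> arbitrary: i)
  case (Until_ltl \<phi> \<psi>)
  then have "sat w i (WeakUntil_ltl \<phi> \<psi>)" and "INFM k. sat w k (Until_ltl \<phi> \<psi>)"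
    by (auto simp: subfs_refl split: if_splits)
  then show ?case by (rule Until_if_WeakUntil_INFM[rotated])
qed auto

lemma sat_imp_pi1_subst:
  assumes "\<forall>u\<in>subfs \<phi>. is_U u \<longrightarrow> u \<notin> A \<longrightarrow> (\<forall>k\<ge>n. \<not> sat w k u)"
    and "n \<le> i" and "sat w i \<phi>"
  shows "sat w i (pi1_subst A \<phi>)"
  using assms
proof (induction \<phi> arbitrary: i)
  case (Until_ltl \<phi> \<psi>)
  then show ?case by (cases "Until_ltl \<phi> \<psi> \<in> A") (auto 0 3 simp: subfs_refl)
next
  case (WeakUntil_ltl \<phi> \<psi>)
  then show ?case by (auto 0 3)
qed auto

lemma sat_sigma1_subst_imp:
  assumes "\<forall>v\<in>subfs \<phi>. is_W v \<longrightarrow> v \<in> A \<longrightarrow> (\<forall>k\<ge>n. sat w k v)"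
    and "n \<le> i" and "sat w i (sigma1_subst A \<phi>)"
  shows "sat w i \<phi>"
  using assms
proof (induction \<phi> arbitrary: i)
  case (Until_ltl \<phi> \<psi>)
  then show ?case by (auto 0 3)
next
  case (WeakUntil_ltl \<phi> \<psi>)
  then show ?case by (cases "WeakUntil_ltl \<phi> \<psi> \<in> A") (auto 0 3 simp: subfs_refl)
qed auto

lemma sat_imp_sigma1_subst:
  assumes "\<forall>v\<in>subfs \<phi>. is_W v \<longrightarrow> v \<notin> A \<longrightarrow> \<not> (MOST k. sat w k v)"
    and "sat w i \<phi>"
  shows "sat w i (sigma1_subst A \<phi>)"
  using assms
proof (induction \<phi> arbitrary: i)
  case (WeakUntil_ltl \<phi> \<psi>)
  show ?case
  proof (cases "WeakUntil_ltl \<phi> \<psi> \<in> A")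
    case False
    then have "sat w i (Until_ltl \<phi> \<psi>)"
      using WeakUntil_ltl.prems by (intro Until_if_WeakUntil_not_MOST) (auto simp: subfs_refl)
    then show ?thesis using False WeakUntil_ltl.IH WeakUntil_ltl.prems(1) by auto
  qed simp
qed auto

lemma sat_sigma2_subst_imp:
  assumes "\<forall>u\<in>subfs \<phi>. is_U u \<longrightarrow> u \<in> A \<longrightarrow> (INFM k. sat w k u)"
    and "sat w i (sigma2_subst A \<phi>)"
  shows "sat w i \<phi>"
  using assms
proof (induction \<phi> arbitrary: i)
  case (WeakUntil_ltl \<phi> \<psi>)
  have IH: "sat w j (sigma2_subst A \<phi>) \<Longrightarrow> sat w j \<phi>" "sat w j (sigma2_subst A \<psi>) \<Longrightarrow> sat w j \<psi>"
    and pi1: "sat w j (pi1_subst A \<phi>) \<Longrightarrow> sat w j \<phi>" for j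
    using WeakUntil_ltl.IH WeakUntil_ltl.prems(1) sat_pi1_subst_imp[of \<phi> A w j] by auto
  from WeakUntil_ltl.prems(2) obtain k where "k \<ge> i" and "\<forall>j\<in>{i..<k}. sat w j \<phi>"
    and "sat w k \<psi> \<or> (\<forall>j\<ge>k. sat w j \<phi>)"
    using IH pi1 by auto
  then show ?case
    using not_le by auto
qed auto

lemma sat_imp_sigma2_subst:
  assumes "\<forall>u\<in>subfs \<phi>. is_U u \<longrightarrow> u \<notin> A \<longrightarrow> (\<forall>k\<ge>n. \<not> sat w k u)"
    and "sat w i \<phi>"
  shows "sat w i (sigma2_subst A \<phi>)"
  using assms
proof (induction \<phi> arbitrary: i)
  case (WeakUntil_ltl \<phi> \<psi>)
  have IH: "sat w j \<phi> \<Longrightarrow> sat w j (sigma2_subst A \<phi>)" "sat w j \<psi> \<Longrightarrow> sat w j (sigma2_subst A \<psi>)"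
    and pi1: "n \<le> j \<Longrightarrow> sat w j \<phi> \<Longrightarrow> sat w j (pi1_subst A \<phi>)" for j
    using WeakUntil_ltl.IH WeakUntil_ltl.prems(1) sat_imp_pi1_subst[of \<phi> A n w j] by auto
  consider "sat w i (Until_ltl \<phi> \<psi>)" | "\<forall>k\<ge>i. sat w k \<phi>"
    using WeakUntil_ltl.prems(2) by auto
  then show ?case
  proof cases
    case 1
    then obtain k where "k \<ge> i" "sat w k \<psi>" "\<forall>j\<in>{i..<k}. sat w j \<phi>"
      by auto
    then show ?thesis
      using IH by (auto intro!: exI[of _ k])
  next
    case 2
    then have "\<forall>j\<ge>max i n. sat w j (pi1_subst A \<phi>)" and "\<forall>j\<in>{i..<max i n}. sat w j (sigma2_subst A \<phi>)"
      using IH pi1 by auto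
    then show ?thesis by (auto intro!: exI[of _ "max i n"])
  qed
qed auto

lemma INFM_sat_if_INFM_sigma1_subst:
  assumes "\<forall>v\<in>subfs \<phi>. is_W v \<longrightarrow> v \<in> A \<longrightarrow> (MOST k. sat w k v)"
    and "INFM k. sat w k (sigma1_subst A \<phi>)"
  shows "INFM k. sat w k \<phi>"
proof -
  obtain n where "\<forall>v\<in>subfs \<phi>. is_W v \<and> v \<in> A \<longrightarrow> (\<forall>k\<ge>n. sat w k v)"
    by (rule MOST_nat_uniform_on_subfs[where Q = "\<lambda>v. is_W v \<and> v \<in> A" and P = "\<lambda>v k. sat w k v"])
      (use assms(1) in blast)
  then have "n \<le> k \<Longrightarrow> sat w k (sigma1_subst A \<phi>) \<Longrightarrow> sat w k \<phi>" for k
    by (intro sat_sigma1_subst_imp[of \<phi> A n]) auto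
  then have "MOST k. sat w k (sigma1_subst A \<phi>) \<longrightarrow> sat w k \<phi>"
    unfolding MOST_nat_le by blast
  with assms(2) show ?thesis
    by (auto elim: INFM_mono dest: INFM_conjI[rotated])
qed

lemma MOST_pi1_subst_if_MOST_sat:
  assumes "\<forall>u\<in>subfs \<phi>. is_U u \<longrightarrow> u \<notin> A \<longrightarrow> \<not> (INFM k. sat w k u)"
    and "MOST k. sat w k \<phi>"
  shows "MOST k. sat w k (pi1_subst A \<phi>)"
proof -
  obtain n where "\<forall>u\<in>subfs \<phi>. is_U u \<and> u \<notin> A \<longrightarrow> (\<forall>k\<ge>n. \<not> sat w k u)"
    by (rule MOST_nat_uniform_on_subfs[where Q = "\<lambda>u. is_U u \<and> u \<notin> A" and P = "\<lambda>u k. \<not> sat w k u"])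
      (use assms(1) in auto)
  then have pi1: "n \<le> k \<Longrightarrow> sat w k \<phi> \<Longrightarrow> sat w k (pi1_subst A \<phi>)" for k
    by (intro sat_imp_pi1_subst) auto
  have "MOST k. sat w k \<phi> \<and> n \<le> k"
    using assms(2) MOST_ge_nat by (rule MOST_conjI)
  then show ?thesis
    by (rule MOST_mono) (use pi1 in blast)
qed

definition guess_holds :: "'a word \<Rightarrow> 'a ltl set \<Rightarrow> bool" where
  "guess_holds w A \<longleftrightarrow> (\<forall>x\<in>A.
     (is_U x \<longrightarrow> (INFM k. sat w k (sigma1_subst A x))) \<and> (is_W x \<longrightarrow> (MOST k. sat w k (pi1_subst A x))))"

lemma guess_holds_sound:
  assumes "guess_holds w A" and "x \<in> A"
  shows "(is_U x \<longrightarrow> (INFM k. sat w k x)) \<and> (is_W x \<longrightarrow> (MOST k. sat w k x))"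
  using assms(2)
proof (induction x rule: measure_induct_rule[where f = fsize])
  case (less x)
  show ?case
  proof (intro conjI impI)
    assume "is_U x"
    then have "\<forall>v\<in>subfs x. is_W v \<longrightarrow> v \<in> A \<longrightarrow> (MOST k. sat w k v)"
      using less.IH fsize_subfs_less not_is_W_if_is_U by blast
    moreover have "INFM k. sat w k (sigma1_subst A x)"
      using assms(1) less.prems \<open>is_U x\<close> by (auto simp: guess_holds_def)
    ultimately show "INFM k. sat w k x"
      by (rule INFM_sat_if_INFM_sigma1_subst)
  next
    assume "is_W x"
    then have "\<forall>u\<in>subfs x. is_U u \<longrightarrow> u \<in> A \<longrightarrow> (INFM k. sat w k u)"
      using less.IH fsize_subfs_less not_is_W_if_is_U by blast
    then have "sat w k (pi1_subst A x) \<Longrightarrow> sat w k x" for k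
      by (rule sat_pi1_subst_imp)
    moreover have "MOST k. sat w k (pi1_subst A x)"
      using assms(1) less.prems \<open>is_W x\<close> by (auto simp: guess_holds_def)
    ultimately show "MOST k. sat w k x"
      by (auto elim: MOST_mono)
  qed
qed

definition canonical_guess :: "'a word \<Rightarrow> 'a ltl \<Rightarrow> 'a ltl set" where
  "canonical_guess w \<phi> =
     {x \<in> subfs \<phi>. is_U x \<and> (INFM k. sat w k x) \<or> is_W x \<and> (MOST k. sat w k x)}"

lemma guess_holds_canonical_guess: "guess_holds w (canonical_guess w \<phi>)"
  unfolding guess_holds_def
proof (intro ballI conjI impI)
  fix x
  assume x: "x \<in> canonical_guess w \<phi>"
  then have sub: "subfs x \<subseteq> subfs \<phi>"
    unfolding canonical_guess_def using subfs_trans by blast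
  {
    assume "is_U x"
    have "sat w k x \<Longrightarrow> sat w k (sigma1_subst (canonical_guess w \<phi>) x)" for k
      using sub by (intro sat_imp_sigma1_subst) (auto simp: canonical_guess_def)
    moreover have "INFM k. sat w k x"
      using x \<open>is_U x\<close> not_is_W_if_is_U by (auto simp: canonical_guess_def)
    ultimately show "INFM k. sat w k (sigma1_subst (canonical_guess w \<phi>) x)"
      by (auto elim: INFM_mono)
  next
    assume "is_W x"
    have "MOST k. sat w k x"
      using x \<open>is_W x\<close> not_is_W_if_is_U by (auto simp: canonical_guess_def)
    then show "MOST k. sat w k (pi1_subst (canonical_guess w \<phi>) x)"
      using sub by (intro MOST_pi1_subst_if_MOST_sat) (auto simp: canonical_guess_def)
  }
qed

lemma sat_iff_exists_guess:
  "sat w i \<phi> \<longleftrightarrow>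
     (\<exists>A \<subseteq> {x \<in> subfs \<phi>. is_U x \<or> is_W x}. sat w i (sigma2_subst A \<phi>) \<and> guess_holds w A)"
proof
  assume "sat w i \<phi>"
  moreover obtain n where "\<forall>u\<in>subfs \<phi>. is_U u \<and> \<not> (INFM k. sat w k u) \<longrightarrow> (\<forall>k\<ge>n. \<not> sat w k u)"
    by (rule MOST_nat_uniform_on_subfs[where P = "\<lambda>u k. \<not> sat w k u"]) auto
  ultimately have "sat w i (sigma2_subst (canonical_guess w \<phi>) \<phi>)"
    by (intro sat_imp_sigma2_subst) (auto simp: canonical_guess_def)
  moreover have "canonical_guess w \<phi> \<subseteq> {x \<in> subfs \<phi>. is_U x \<or> is_W x}"
    by (auto simp: canonical_guess_def)
  ultimately show "\<exists>A \<subseteq> {x \<in> subfs \<phi>. is_U x \<or> is_W x}. sat w i (sigma2_subst A \<phi>) \<and> guess_holds w A"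
    using guess_holds_canonical_guess by blast
next
  assume "\<exists>A \<subseteq> {x \<in> subfs \<phi>. is_U x \<or> is_W x}. sat w i (sigma2_subst A \<phi>) \<and> guess_holds w A"
  then obtain A where "sat w i (sigma2_subst A \<phi>)" and "guess_holds w A"
    by blast
  then show "sat w i \<phi>"
    using guess_holds_sound by (blast intro: sat_sigma2_subst_imp)
qed

section \<open>The normalised formula\<close>

fun uw_subformulas :: "'a ltl \<Rightarrow> 'a ltl list" where
  "uw_subformulas (Until_ltl \<phi> \<psi>) = Until_ltl \<phi> \<psi> # uw_subformulas \<phi> @ uw_subformulas \<psi>"
| "uw_subformulas (WeakUntil_ltl \<phi> \<psi>) = WeakUntil_ltl \<phi> \<psi> # uw_subformulas \<phi> @ uw_subformulas \<psi>"
| "uw_subformulas (And_ltl \<phi> \<psi>) = uw_subformulas \<phi> @ uw_subformulas \<psi>"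
| "uw_subformulas (Or_ltl \<phi> \<psi>) = uw_subformulas \<phi> @ uw_subformulas \<psi>"
| "uw_subformulas (Next_ltl \<phi>) = uw_subformulas \<phi>"
| "uw_subformulas (GF_ltl \<phi>) = uw_subformulas \<phi>"
| "uw_subformulas (FG_ltl \<phi>) = uw_subformulas \<phi>"
| "uw_subformulas _ = []"

lemma set_uw_subformulas: "set (uw_subformulas \<phi>) = {x \<in> subfs \<phi>. is_U x \<or> is_W x}"
proof -
  have "x \<in> set (uw_subformulas \<phi>) \<longleftrightarrow> x \<in> subfs \<phi> \<and> (is_U x \<or> is_W x)" for x
    by (induction \<phi>) auto
  then show ?thesis
    by blast
qed

lemma length_uw_subformulas: "length (uw_subformulas \<phi>) \<le> fsize \<phi>"
  by (induction \<phi>) auto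

definition conj_list :: "'a ltl list \<Rightarrow> 'a ltl" where
  "conj_list xs = foldr And_ltl xs True_ltl"

definition disj_list :: "'a ltl list \<Rightarrow> 'a ltl" where
  "disj_list xs = foldr Or_ltl xs False_ltl"

lemma sat_conj_list [simp]: "sat w i (conj_list xs) \<longleftrightarrow> (\<forall>x\<in>set xs. sat w i x)"
  by (induction xs) (simp_all add: conj_list_def)

lemma sat_disj_list [simp]: "sat w i (disj_list xs) \<longleftrightarrow> (\<exists>x\<in>set xs. sat w i x)"
  by (induction xs) (simp_all add: disj_list_def)

definition limit_conjunct :: "'a ltl set \<Rightarrow> 'a ltl \<Rightarrow> 'a ltl" where
  "limit_conjunct A x = (if is_U x then GF_ltl (sigma1_subst A x) else FG_ltl (pi1_subst A x))"

definition guess_formula :: "'a ltl \<Rightarrow> 'a ltl list \<Rightarrow> 'a ltl" where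
  "guess_formula \<phi> xs =
     And_ltl (sigma2_subst (set xs) \<phi>) (conj_list (map (limit_conjunct (set xs)) xs))"

definition normalize :: "'a ltl \<Rightarrow> 'a ltl" where
  "normalize \<phi> =
     disj_list (map (guess_formula (elim_limits \<phi>)) (subseqs (uw_subformulas (elim_limits \<phi>))))"

lemma subseqs_uw_subformulas:
  "xs \<in> set (subseqs (uw_subformulas \<phi>)) \<Longrightarrow> set xs \<subseteq> {x \<in> subfs \<phi>. is_U x \<or> is_W x}"
  using subseqs_powset[of "uw_subformulas \<phi>"] set_uw_subformulas[of \<phi>] by blast

lemma sat_guess_formula:
  assumes "\<forall>x\<in>set xs. is_U x \<or> is_W x"
  shows "sat w i (guess_formula \<phi> xs) \<longleftrightarrow> sat w i (sigma2_subst (set xs) \<phi>) \<and> guess_holds w (set xs)"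
proof -
  have "sat w i (limit_conjunct A x) \<longleftrightarrow>
      (is_U x \<longrightarrow> (INFM k. sat w k (sigma1_subst A x))) \<and> (is_W x \<longrightarrow> (MOST k. sat w k (pi1_subst A x)))"
    if "is_U x \<or> is_W x" for A x
    using that not_is_W_if_is_U by (auto simp: limit_conjunct_def)
  then show ?thesis
    using assms by (auto simp: guess_formula_def guess_holds_def)
qed

lemma sat_normalize: "sat w i (normalize \<phi>) \<longleftrightarrow> sat w i \<phi>"
proof -
  define \<psi> where "\<psi> = elim_limits \<phi>"
  define UW where "UW = {x \<in> subfs \<psi>. is_U x \<or> is_W x}"
  have subseqs: "set ` set (subseqs (uw_subformulas \<psi>)) = Pow UW"
    unfolding UW_def by (simp add: subseqs_powset set_uw_subformulas)
  have "sat w i (normalize \<phi>) \<longleftrightarrow>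
      (\<exists>xs\<in>set (subseqs (uw_subformulas \<psi>)). sat w i (guess_formula \<psi> xs))"
    by (simp add: normalize_def \<psi>_def)
  also have "\<dots> \<longleftrightarrow>
      (\<exists>xs\<in>set (subseqs (uw_subformulas \<psi>)). sat w i (sigma2_subst (set xs) \<psi>) \<and> guess_holds w (set xs))"
    using subseqs unfolding UW_def by (intro bex_cong refl sat_guess_formula) blast
  also have "\<dots> \<longleftrightarrow> (\<exists>A\<in>Pow UW. sat w i (sigma2_subst A \<psi>) \<and> guess_holds w A)"
    unfolding subseqs[symmetric] by blast
  also have "\<dots> \<longleftrightarrow> sat w i \<psi>"
    unfolding sat_iff_exists_guess[of w i \<psi>] UW_def by auto
  also have "\<dots> \<longleftrightarrow> sat w i \<phi>"
    unfolding \<psi>_def by (rule sat_elim_limits)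
  finally show ?thesis .
qed

section \<open>Normal form\<close>

fun sigma1 :: "'a ltl \<Rightarrow> bool" where
  "sigma1 (And_ltl \<phi> \<psi>) \<longleftrightarrow> sigma1 \<phi> \<and> sigma1 \<psi>"
| "sigma1 (Or_ltl \<phi> \<psi>) \<longleftrightarrow> sigma1 \<phi> \<and> sigma1 \<psi>"
| "sigma1 (Next_ltl \<phi>) \<longleftrightarrow> sigma1 \<phi>"
| "sigma1 (Until_ltl \<phi> \<psi>) \<longleftrightarrow> sigma1 \<phi> \<and> sigma1 \<psi>"
| "sigma1 (WeakUntil_ltl \<phi> \<psi>) \<longleftrightarrow> False"
| "sigma1 (GF_ltl \<phi>) \<longleftrightarrow> False"
| "sigma1 (FG_ltl \<phi>) \<longleftrightarrow> False"
| "sigma1 _ \<longleftrightarrow> True"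

fun pi1 :: "'a ltl \<Rightarrow> bool" where
  "pi1 (And_ltl \<phi> \<psi>) \<longleftrightarrow> pi1 \<phi> \<and> pi1 \<psi>"
| "pi1 (Or_ltl \<phi> \<psi>) \<longleftrightarrow> pi1 \<phi> \<and> pi1 \<psi>"
| "pi1 (Next_ltl \<phi>) \<longleftrightarrow> pi1 \<phi>"
| "pi1 (WeakUntil_ltl \<phi> \<psi>) \<longleftrightarrow> pi1 \<phi> \<and> pi1 \<psi>"
| "pi1 (Until_ltl \<phi> \<psi>) \<longleftrightarrow> False"
| "pi1 (GF_ltl \<phi>) \<longleftrightarrow> False"
| "pi1 (FG_ltl \<phi>) \<longleftrightarrow> False"
| "pi1 _ \<longleftrightarrow> True"

fun sigma2 :: "'a ltl \<Rightarrow> bool" where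
  "sigma2 (And_ltl \<phi> \<psi>) \<longleftrightarrow> sigma2 \<phi> \<and> sigma2 \<psi>"
| "sigma2 (Or_ltl \<phi> \<psi>) \<longleftrightarrow> sigma2 \<phi> \<and> sigma2 \<psi>"
| "sigma2 (Next_ltl \<phi>) \<longleftrightarrow> sigma2 \<phi>"
| "sigma2 (Until_ltl \<phi> \<psi>) \<longleftrightarrow> sigma2 \<phi> \<and> sigma2 \<psi>"
| "sigma2 (WeakUntil_ltl \<phi> \<psi>) \<longleftrightarrow> pi1 \<phi> \<and> pi1 \<psi>"
| "sigma2 (GF_ltl \<phi>) \<longleftrightarrow> False"
| "sigma2 (FG_ltl \<phi>) \<longleftrightarrow> False"
| "sigma2 _ \<longleftrightarrow> True"

fun nf_syntax :: "'a ltl \<Rightarrow> bool" where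
  "nf_syntax (And_ltl \<phi> \<psi>) \<longleftrightarrow> nf_syntax \<phi> \<and> nf_syntax \<psi>"
| "nf_syntax (Or_ltl \<phi> \<psi>) \<longleftrightarrow> nf_syntax \<phi> \<and> nf_syntax \<psi>"
| "nf_syntax (GF_ltl \<phi>) \<longleftrightarrow> sigma1 \<phi>"
| "nf_syntax (FG_ltl \<phi>) \<longleftrightarrow> pi1 \<phi>"
| "nf_syntax \<phi> \<longleftrightarrow> sigma2 \<phi>"

lemma sigma1_subfsD: "sigma1 \<phi> \<Longrightarrow> \<chi> \<in> subfs \<phi> \<Longrightarrow> \<not> is_W \<chi> \<and> \<not> is_limit \<chi>"
  by (induction \<phi>) (auto simp: is_limit_def)

lemma pi1_subfsD: "pi1 \<phi> \<Longrightarrow> \<chi> \<in> subfs \<phi> \<Longrightarrow> \<not> is_U \<chi> \<and> \<not> is_limit \<chi>"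
  by (induction \<phi>) (auto simp: is_limit_def)

lemma pi1_subfs: "pi1 \<phi> \<Longrightarrow> \<chi> \<in> subfs \<phi> \<Longrightarrow> pi1 \<chi>"
  by (induction \<phi>) auto

lemma sigma2_if_pi1: "pi1 \<phi> \<Longrightarrow> sigma2 \<phi>"
  by (induction \<phi>) auto

lemma sigma2_if_sigma1: "sigma1 \<phi> \<Longrightarrow> sigma2 \<phi>"
  by (induction \<phi>) auto

lemma nf_syntax_if_sigma2: "sigma2 \<phi> \<Longrightarrow> nf_syntax \<phi>"
  by (induction \<phi>) auto

lemma sigma2_subfs: "sigma2 \<phi> \<Longrightarrow> \<chi> \<in> subfs \<phi> \<Longrightarrow> sigma2 \<chi>"
  by (induction \<phi>) (auto dest: pi1_subfs intro: sigma2_if_pi1)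

lemma sigma2_not_limit: "sigma2 \<phi> \<Longrightarrow> \<not> is_limit \<phi>"
  by (cases \<phi>) (auto simp: is_limit_def)

lemma nf_syntax_subfs: "nf_syntax \<phi> \<Longrightarrow> \<chi> \<in> subfs \<phi> \<Longrightarrow> nf_syntax \<chi>"
proof (induction \<phi>)
  case (GF_ltl \<phi>)
  then show ?case
    by (auto intro: nf_syntax_if_sigma2 sigma2_subfs sigma2_if_sigma1)
next
  case (FG_ltl \<phi>)
  then show ?case
    by (auto intro: nf_syntax_if_sigma2 sigma2_subfs sigma2_if_pi1)
qed (auto intro: nf_syntax_if_sigma2 sigma2_subfs sigma2_if_pi1 dest: pi1_subfs)

lemma nf_syntax_node:
  assumes "nf_syntax \<psi>" and "\<chi> \<in> proper_subfs \<psi>"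
  shows "(is_temporal \<psi> \<longrightarrow> \<not> is_limit \<chi>) \<and> (is_W \<psi> \<longrightarrow> \<not> is_U \<chi>) \<and>
    (is_GF \<psi> \<longrightarrow> \<not> is_W \<chi>) \<and> (is_FG \<psi> \<longrightarrow> \<not> is_U \<chi>)"
  using assms
  by (cases \<psi>) (auto simp: proper_subfs_def is_temporal_def
      dest: sigma1_subfsD pi1_subfsD sigma2_subfs sigma2_not_limit)

lemma normal_form_if_nf_syntax: "nf_syntax \<phi> \<Longrightarrow> normal_form \<phi>"
  unfolding normal_form_def under_def using nf_syntax_node nf_syntax_subfs by blast

lemma pi1_pi1_subst: "limit_free \<phi> \<Longrightarrow> pi1 (pi1_subst A \<phi>)"
  by (induction \<phi>) auto

lemma sigma1_sigma1_subst: "limit_free \<phi> \<Longrightarrow> sigma1 (sigma1_subst A \<phi>)"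
  by (induction \<phi>) auto

lemma sigma2_sigma2_subst: "limit_free \<phi> \<Longrightarrow> sigma2 (sigma2_subst A \<phi>)"
  by (induction \<phi>) (auto simp: pi1_pi1_subst)

lemma nf_syntax_conj_list: "\<forall>x\<in>set xs. nf_syntax x \<Longrightarrow> nf_syntax (conj_list xs)"
  by (induction xs) (simp_all add: conj_list_def)

lemma nf_syntax_disj_list: "\<forall>x\<in>set xs. nf_syntax x \<Longrightarrow> nf_syntax (disj_list xs)"
  by (induction xs) (simp_all add: disj_list_def)

lemma nf_syntax_guess_formula:
  assumes "limit_free \<phi>" and "set xs \<subseteq> subfs \<phi>"
  shows "nf_syntax (guess_formula \<phi> xs)"
proof -
  have "limit_free x" if "x \<in> set xs" for x
    using assms limit_free_subfs that by blast
  then have "\<forall>x\<in>set xs. nf_syntax (limit_conjunct (set xs) x)"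
    by (simp add: limit_conjunct_def sigma1_sigma1_subst pi1_pi1_subst)
  then show ?thesis
    using assms(1) unfolding guess_formula_def
    by (simp add: nf_syntax_conj_list nf_syntax_if_sigma2 sigma2_sigma2_subst)
qed

lemma normal_form_normalize: "normal_form (normalize \<phi>)"
proof -
  have "nf_syntax (normalize \<phi>)"
    unfolding normalize_def using limit_free_elim_limits subseqs_uw_subformulas
    by (fastforce intro!: nf_syntax_disj_list nf_syntax_guess_formula)
  then show ?thesis
    by (rule normal_form_if_nf_syntax)
qed

section \<open>Atoms and size\<close>

lemma atoms_pi1_subst: "atoms (pi1_subst A \<phi>) \<subseteq> atoms \<phi>"
  by (induction \<phi>) auto

lemma atoms_sigma1_subst: "atoms (sigma1_subst A \<phi>) \<subseteq> atoms \<phi>"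
  by (induction \<phi>) auto

lemma atoms_sigma2_subst: "atoms (sigma2_subst A \<phi>) \<subseteq> atoms \<phi>"
  by (induction \<phi>) (use atoms_pi1_subst in fastforce)+

lemma atoms_conj_list: "atoms (conj_list xs) = (\<Union>x\<in>set xs. atoms x)"
  by (induction xs) (simp_all add: conj_list_def)

lemma atoms_disj_list: "atoms (disj_list xs) = (\<Union>x\<in>set xs. atoms x)"
  by (induction xs) (simp_all add: disj_list_def)

lemma atoms_limit_conjunct: "atoms (limit_conjunct A x) \<subseteq> atoms x"
  by (simp add: limit_conjunct_def atoms_sigma1_subst atoms_pi1_subst)

lemma atoms_guess_formula:
  assumes "set xs \<subseteq> subfs \<phi>"
  shows "atoms (guess_formula \<phi> xs) \<subseteq> atoms \<phi>"
proof -
  have "atoms (limit_conjunct (set xs) x) \<subseteq> atoms \<phi>" if "x \<in> set xs" for x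
    using atoms_limit_conjunct atoms_subfs[of x \<phi>] assms that by (meson order_trans subsetD)
  then show ?thesis
    using atoms_sigma2_subst[of "set xs" \<phi>] by (auto simp: guess_formula_def atoms_conj_list)
qed

lemma atoms_normalize: "atoms (normalize \<phi>) \<subseteq> atoms \<phi>"
proof -
  have "atoms (guess_formula (elim_limits \<phi>) xs) \<subseteq> atoms \<phi>"
    if "xs \<in> set (subseqs (uw_subformulas (elim_limits \<phi>)))" for xs
    using atoms_guess_formula[of xs "elim_limits \<phi>"] subseqs_uw_subformulas[OF that]
    by (auto simp: atoms_elim_limits)
  then show ?thesis
    by (auto simp: normalize_def atoms_disj_list)
qed

lemma fsize_pi1_subst: "fsize (pi1_subst A \<phi>) \<le> fsize \<phi>"
  by (induction \<phi>) auto

lemma fsize_sigma1_subst: "fsize (sigma1_subst A \<phi>) \<le> fsize \<phi>"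
  by (induction \<phi>) auto

lemma fsize_sigma2_subst: "fsize (sigma2_subst A \<phi>) \<le> fsize \<phi> ^ 2"
proof (induction \<phi>)
  case (WeakUntil_ltl \<phi> \<psi>)
  have "fsize (sigma2_subst A (WeakUntil_ltl \<phi> \<psi>)) \<le> fsize \<phi> ^ 2 + fsize \<psi> ^ 2 + fsize \<phi> + 4"
    using WeakUntil_ltl fsize_pi1_subst[of A \<phi>] by simp
  also have "\<dots> \<le> (1 + fsize \<phi> + fsize \<psi>) ^ 2"
    using fsize_pos[of \<phi>] fsize_pos[of \<psi>] by (simp add: power2_eq_square algebra_simps)
  finally show ?case by simp
qed (auto simp: power2_eq_square algebra_simps)

lemma fsize_conj_list:
  "\<forall>x\<in>set xs. fsize x \<le> m \<Longrightarrow> fsize (conj_list xs) \<le> 1 + length xs * (m + 1)"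
  by (induction xs) (auto simp: conj_list_def)

lemma fsize_disj_list:
  "\<forall>x\<in>set xs. fsize x \<le> m \<Longrightarrow> fsize (disj_list xs) \<le> 1 + length xs * (m + 1)"
  by (induction xs) (auto simp: disj_list_def)

lemma length_le_if_in_subseqs: "xs \<in> set (subseqs ys) \<Longrightarrow> length xs \<le> length ys"
  by (induction ys arbitrary: xs) (auto simp: Let_def intro: le_SucI)

lemma fsize_guess_formula:
  assumes "set xs \<subseteq> subfs \<phi>" and "length xs \<le> fsize \<phi>"
  shows "fsize (guess_formula \<phi> xs) \<le> 2 * fsize \<phi> ^ 2 + 2 * fsize \<phi> + 2"
proof -
  let ?n = "fsize \<phi>"
  have "fsize (limit_conjunct (set xs) x) \<le> ?n + 1" if "x \<in> set xs" for x
    using fsize_subfs_le[of x \<phi>] assms(1) that fsize_sigma1_subst[of _ x] fsize_pi1_subst[of _ x]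
    by (auto simp: limit_conjunct_def intro: le_trans)
  then have "fsize (conj_list (map (limit_conjunct (set xs)) xs)) \<le> 1 + length xs * (?n + 2)"
    using fsize_conj_list[of "map (limit_conjunct (set xs)) xs" "?n + 1"] by simp
  also have "\<dots> \<le> 1 + ?n * (?n + 2)"
    using assms(2) by (simp only: add_left_mono mult_le_mono1)
  finally show ?thesis
    using fsize_sigma2_subst[of "set xs" \<phi>]
    by (simp add: guess_formula_def power2_eq_square algebra_simps)
qed

lemma quadratic_le_pow4: "2 * n ^ 2 + 2 * n + 3 \<le> 7 * 4 ^ n"
proof -
  have "n < 2 ^ n"
    by (rule less_exp)
  then have "n ^ 2 \<le> (2 ^ n) ^ 2"
    by (simp add: power_mono)
  also have "\<dots> = ((2::nat) ^ 2) ^ n"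
    by (simp only: power_mult[symmetric] mult.commute)
  finally have "n ^ 2 \<le> 4 ^ n"
    by simp
  moreover have "n \<le> 4 ^ n"
    using \<open>n < 2 ^ n\<close> power_mono[of 2 4 n] by simp
  moreover have "1 \<le> (4::nat) ^ n"
    by simp
  ultimately show ?thesis
    by linarith
qed

lemma fsize_normalize: "fsize (normalize \<phi>) \<le> 8 ^ (fsize (elim_limits \<phi>) + 1)"
proof -
  define \<psi> where "\<psi> = elim_limits \<phi>"
  define n where "n = fsize \<psi>"
  define L where "L = uw_subformulas \<psi>"
  have "length L \<le> n"
    unfolding L_def n_def by (rule length_uw_subformulas)
  have "fsize (guess_formula \<psi> xs) \<le> 2 * n ^ 2 + 2 * n + 2" if "xs \<in> set (subseqs L)" for xs
    using subseqs_uw_subformulas[OF that[unfolded L_def]] length_le_if_in_subseqs[OF that]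
      \<open>length L \<le> n\<close>
    unfolding n_def L_def by (intro fsize_guess_formula) auto
  then have "fsize (normalize \<phi>) \<le> 1 + 2 ^ length L * (2 * n ^ 2 + 2 * n + 3)"
    using fsize_disj_list[of "map (guess_formula \<psi>) (subseqs L)" "2 * n ^ 2 + 2 * n + 2"]
    by (simp add: normalize_def \<psi>_def L_def length_subseqs algebra_simps)
  also have "\<dots> \<le> 1 + 2 ^ n * (7 * 4 ^ n)"
    using \<open>length L \<le> n\<close> quadratic_le_pow4[of n]
    by (intro add_left_mono mult_le_mono power_increasing) auto
  also have "\<dots> = 1 + 7 * 8 ^ n"
    using power_mult_distrib[of "2::nat" 4 n] by simp
  also have "\<dots> \<le> 8 ^ (n + 1)"
    by simp
  finally show ?thesis
    unfolding n_def \<psi>_def .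
qed

lemma pow8_le_pow4:
  assumes "n + 3 \<le> 4 * m"
  shows "(8::nat) ^ (n + 1) \<le> 4 ^ (7 * m)"
proof -
  have "(8::nat) ^ (n + 1) = (2 ^ 3) ^ (n + 1)"
    by simp
  also have "\<dots> = 2 ^ (3 * (n + 1))"
    by (simp only: power_mult)
  also have "\<dots> \<le> 2 ^ (2 * (7 * m))"
    using assms by (intro power_increasing) auto
  also have "\<dots> = (2 ^ 2) ^ (7 * m)"
    by (simp only: power_mult)
  also have "\<dots> = 4 ^ (7 * m)"
    by simp
  finally show ?thesis .
qed

theorem theorem3:
  fixes Ap :: "'a set" and \<phi> :: "'a ltl"
  assumes "finite Ap" and "atoms \<phi> \<subseteq> Ap"
  shows "\<exists>\<phi>'. atoms \<phi>' \<subseteq> Ap \<and> normal_form \<phi>' \<and> equiv_ltl Ap \<phi>' \<phi> \<and> fsize \<phi>' \<le> 4 ^ (7 * fsize \<phi>)"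
proof (intro exI[of _ "normalize \<phi>"] conjI)
  show "atoms (normalize \<phi>) \<subseteq> Ap"
    using atoms_normalize assms(2) by (rule order_trans)
  show "normal_form (normalize \<phi>)"
    by (rule normal_form_normalize)
  show "equiv_ltl Ap (normalize \<phi>) \<phi>"
    by (simp add: equiv_ltl_def models_eq_sat_0 sat_normalize)
  have "(8::nat) ^ (fsize (elim_limits \<phi>) + 1) \<le> 4 ^ (7 * fsize \<phi>)"
    using fsize_elim_limits by (rule pow8_le_pow4)
  then show "fsize (normalize \<phi>) \<le> 4 ^ (7 * fsize \<phi>)"
    using fsize_normalize by (rule order_trans[rotated])
qed

end
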